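(* Let $\varrho\ge1$ and $K\ge 4\varrho+1$ be integers, and consider a configuration satisfying $WU_0$ (for clocks with values in $\{0,\dots,K-1\}$). Let $p,q$ be processes with $d(p,q)\le 2\varrho$, and let $a=p.r$, $b=q.r$. Then the intrinsic delay satisfies $\delta_{(p,q)}=\overline{b-a}$ if $0\le\overline{b-a}\le 2\varrho$, and $\delta_{(p,q)}=-\overline{a-b}$ otherwise.
   Context: Let $G=(V,E)$ be a finite connected undirected graph with hop distance $d$. For an integer $a$, $\bar a\in\{0,\dots,K-1\}$ is its residue modulo $K$. Each process $p$ holds a clock $p.r\in\{0,\dots,K-1\}$. Integers $a,b$ are locally comparable if $\min(\overline{a-b},\overline{b-a})\le1$, and then $b\ominus a=\overline{b-a}$ if $\overline{b-a}\le1$, and $b\ominus a=-\overline{a-b}$ otherwise. A configuration satisfies $WU$ if for every edge $\{p,q\}$, $p.r$ and $q.r$ are locally comparable. The delay of a path $\mu=p_0p_1\ldots p_k$ is $\delta_\mu=\sum_{i=0}^{k-1}(p_{i+1}.r\ominus p_i.r)$ ($0$ if $k=0$). A configuration satisfies $WU_0$ if it satisfies $WU$ and for all $p,q$ all paths from $p$ to $q$ have the same delay, denoted $\delta_{(p,q)}$ (the intrinsic delay). *)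

theory Defs
  imports Main
begin

definition graph :: "'a set \<Rightarrow> ('a \<Rightarrow> 'a \<Rightarrow> bool) \<Rightarrow> bool" where
  "graph V E \<longleftrightarrow> finite V \<and> (\<forall>x y. E x y \<longrightarrow> x \<in> V \<and> y \<in> V \<and> x \<noteq> y \<and> E y x)"

definition is_path :: "'a set \<Rightarrow> ('a \<Rightarrow> 'a \<Rightarrow> bool) \<Rightarrow> 'a list \<Rightarrow> 'a \<Rightarrow> 'a \<Rightarrow> bool" where
  "is_path V E \<mu> p q \<longleftrightarrow> \<mu> \<noteq> [] \<and> hd \<mu> = p \<and> last \<mu> = q \<and> set \<mu> \<subseteq> V \<and>
     (\<forall>i. Suc i < length \<mu> \<longrightarrow> E (\<mu> ! i) (\<mu> ! Suc i))"

definition connected_graph :: "'a set \<Rightarrow> ('a \<Rightarrow> 'a \<Rightarrow> bool) \<Rightarrow> bool" where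
  "connected_graph V E \<longleftrightarrow> V \<noteq> {} \<and> (\<forall>p\<in>V. \<forall>q\<in>V. \<exists>\<mu>. is_path V E \<mu> p q)"

definition hop_dist :: "'a set \<Rightarrow> ('a \<Rightarrow> 'a \<Rightarrow> bool) \<Rightarrow> 'a \<Rightarrow> 'a \<Rightarrow> nat" where
  "hop_dist V E p q = (LEAST n. \<exists>\<mu>. is_path V E \<mu> p q \<and> length \<mu> = Suc n)"

definition res :: "int \<Rightarrow> int \<Rightarrow> int" where
  "res K a = a mod K"

definition loc_comparable :: "int \<Rightarrow> int \<Rightarrow> int \<Rightarrow> bool" where
  "loc_comparable K a b \<longleftrightarrow> min (res K (a - b)) (res K (b - a)) \<le> 1"

definition ominus :: "int \<Rightarrow> int \<Rightarrow> int \<Rightarrow> int" where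
  "ominus K b a = (if res K (b - a) \<le> 1 then res K (b - a) else - res K (a - b))"

definition WU :: "int \<Rightarrow> 'a set \<Rightarrow> ('a \<Rightarrow> 'a \<Rightarrow> bool) \<Rightarrow> ('a \<Rightarrow> int) \<Rightarrow> bool" where
  "WU K V E r \<longleftrightarrow> (\<forall>p q. E p q \<longrightarrow> loc_comparable K (r p) (r q))"

definition path_delay :: "int \<Rightarrow> ('a \<Rightarrow> int) \<Rightarrow> 'a list \<Rightarrow> int" where
  "path_delay K r \<mu> = (\<Sum>i<length \<mu> - 1. ominus K (r (\<mu> ! Suc i)) (r (\<mu> ! i)))"

definition WU0 :: "int \<Rightarrow> 'a set \<Rightarrow> ('a \<Rightarrow> 'a \<Rightarrow> bool) \<Rightarrow> ('a \<Rightarrow> int) \<Rightarrow> bool" where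
  "WU0 K V E r \<longleftrightarrow> WU K V E r \<and>
     (\<forall>p q \<mu> \<nu>. is_path V E \<mu> p q \<longrightarrow> is_path V E \<nu> p q \<longrightarrow> path_delay K r \<mu> = path_delay K r \<nu>)"

definition intrinsic_delay :: "int \<Rightarrow> 'a set \<Rightarrow> ('a \<Rightarrow> 'a \<Rightarrow> bool) \<Rightarrow> ('a \<Rightarrow> int) \<Rightarrow> 'a \<Rightarrow> 'a \<Rightarrow> int" where
  "intrinsic_delay K V E r p q = (THE \<delta>. \<forall>\<mu>. is_path V E \<mu> p q \<longrightarrow> path_delay K r \<mu> = \<delta>)"

end

theory Submission
  imports Defs
begin

(* Along any path the local delay  b \<ominus> a  of each edge is an
   integer of absolute value at most 1 that is congruent to  b - a  modulo K.
   Summing along a path \<mu> from p to q and telescoping, the delay of \<mu> is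
   congruent to  r q - r p  modulo K and bounded in absolute value by the number
   of edges of \<mu>.  Under WU0 the intrinsic delay is the delay of any path, so we
   choose a shortest one: its delay D satisfies |D| \<le> d(p,q) \<le> 2\<rho>.  Since
   K \<ge> 4\<rho> + 1, the interval [-2\<rho>, 2\<rho>] contains exactly one representative
   of each residue class, and that representative is the value claimed. *)

lemma ominus_congruent: "K dvd (ominus K b a - (b - a))"
proof -
  have residue: "K dvd (x mod K - x)" for x :: int
    by (rule mod_eq_dvd_iff[THEN iffD1]) simp
  have "K dvd ((b - a) mod K - (b - a))" by (rule residue)
  moreover have "K dvd (- ((a - b) mod K) - (b - a))"
    using residue[of "a - b"] by (metis dvd_minus_iff minus_diff_eq diff_minus_eq_add uminus_add_conv_diff)
  ultimately show ?thesis unfolding ominus_def res_def by auto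
qed

lemma ominus_bounded:
  assumes "loc_comparable K a b" and "K > 0"
  shows "\<bar>ominus K b a\<bar> \<le> 1"
proof -
  have "0 \<le> (b - a) mod K" "0 \<le> (a - b) mod K" using \<open>K > 0\<close> by auto
  then show ?thesis using assms(1)
    unfolding ominus_def loc_comparable_def res_def by (auto simp: min_def split: if_splits)
qed

text \<open>Telescoping: the delay of a path is congruent to the clock difference
  between its endpoints.\<close>
lemma path_delay_congruent:
  assumes "\<mu> \<noteq> []"
  shows "K dvd (path_delay K r \<mu> - (r (last \<mu>) - r (hd \<mu>)))"
proof -
  define n where "n = length \<mu> - 1"
  have "K dvd (\<Sum>i<n. ominus K (r (\<mu> ! Suc i)) (r (\<mu> ! i)) - (r (\<mu> ! Suc i) - r (\<mu> ! i)))"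
    by (intro dvd_sum ominus_congruent)
  moreover have "(\<Sum>i<n. r (\<mu> ! Suc i) - r (\<mu> ! i)) = r (\<mu> ! n) - r (\<mu> ! 0)"
    by (rule sum_lessThan_telescope)
  moreover have "\<mu> ! 0 = hd \<mu>" "\<mu> ! n = last \<mu>"
    using assms unfolding n_def by (simp_all add: hd_conv_nth last_conv_nth)
  ultimately show ?thesis
    unfolding path_delay_def n_def[symmetric] sum_subtractf by simp
qed

text \<open>Under WU each edge contributes at most 1, so the delay is bounded by the
  number of edges of the path.\<close>
lemma path_delay_bounded:
  assumes "WU K V E r" and "K > 0" and "is_path V E \<mu> p q"
  shows "\<bar>path_delay K r \<mu>\<bar> \<le> int (length \<mu> - 1)"
proof -
  define n where "n = length \<mu> - 1"
  have edge: "\<bar>ominus K (r (\<mu> ! Suc i)) (r (\<mu> ! i))\<bar> \<le> 1" if "i < n" for i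
  proof (rule ominus_bounded[OF _ \<open>K > 0\<close>])
    have "E (\<mu> ! i) (\<mu> ! Suc i)"
      using assms(3) that unfolding is_path_def n_def by auto
    then show "loc_comparable K (r (\<mu> ! i)) (r (\<mu> ! Suc i))"
      using assms(1) unfolding WU_def by blast
  qed
  have "\<bar>path_delay K r \<mu>\<bar> \<le> (\<Sum>i<n. \<bar>ominus K (r (\<mu> ! Suc i)) (r (\<mu> ! i))\<bar>)"
    unfolding path_delay_def n_def by (rule sum_abs)
  also have "\<dots> \<le> (\<Sum>i<n. 1)" using edge by (intro sum_mono) auto
  finally show ?thesis unfolding n_def by simp
qed

lemma shortest_path_exists:
  assumes "connected_graph V E" and "p \<in> V" and "q \<in> V"
  obtains \<mu> where "is_path V E \<mu> p q" and "length \<mu> = Suc (hop_dist V E p q)"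
proof -
  obtain \<mu>0 where \<mu>0: "is_path V E \<mu>0 p q"
    using assms unfolding connected_graph_def by blast
  then have "length \<mu>0 = Suc (length \<mu>0 - 1)" unfolding is_path_def by (cases \<mu>0) auto
  with \<mu>0 have "\<exists>n \<mu>. is_path V E \<mu> p q \<and> length \<mu> = Suc n" by blast
  from LeastI_ex[OF this] show ?thesis
    using that unfolding hop_dist_def by blast
qed

lemma intrinsic_delay_eq_path_delay:
  assumes "WU0 K V E r" and "is_path V E \<mu> p q"
  shows "intrinsic_delay K V E r p q = path_delay K r \<mu>"
  unfolding intrinsic_delay_def
  using assms unfolding WU0_def by (intro the_equality) metis+

lemma small_representative:
  fixes D x K \<rho> :: int
  assumes "K dvd (D - x)" and "\<bar>D\<bar> \<le> 2 * \<rho>" and "K \<ge> 4 * \<rho> + 1"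
  shows "D = (if 0 \<le> x mod K \<and> x mod K \<le> 2 * \<rho> then x mod K else - ((- x) mod K))"
proof -
  have same_residue: "D mod K = x mod K" using assms(1) by (simp add: mod_eq_dvd_iff)
  show ?thesis
  proof (cases "D \<ge> 0")
    case True
    then have "D mod K = D" using assms by (intro mod_pos_pos_trivial) auto
    then show ?thesis using same_residue True assms by auto
  next
    case False
    have "(D + K) mod K = D + K" using assms False by (intro mod_pos_pos_trivial) auto
    then have x_mod: "x mod K = D + K" using same_residue by simp
    then have "(- x) mod K = K - x mod K" using False assms
      by (simp add: zmod_zminus1_eq_if)
    then show ?thesis using x_mod False assms by auto
  qed
qed

theorem mainTheorem7:
  fixes V :: "'a set" and E :: "'a \<Rightarrow> 'a \<Rightarrow> bool" and r :: "'a \<Rightarrow> int"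
    and \<rho> :: nat and K :: int and p q :: 'a
  assumes "graph V E" and "connected_graph V E"
    and "\<rho> \<ge> 1" and "K \<ge> 4 * int \<rho> + 1"
    and "\<forall>x\<in>V. 0 \<le> r x \<and> r x < K"
    and "WU0 K V E r"
    and "p \<in> V" and "q \<in> V" and "hop_dist V E p q \<le> 2 * \<rho>"
  shows "intrinsic_delay K V E r p q =
           (if 0 \<le> res K (r q - r p) \<and> res K (r q - r p) \<le> 2 * int \<rho>
            then res K (r q - r p) else - res K (r p - r q))"
proof -
  have "K > 0" using assms(3,4) by simp
  obtain \<mu> where \<mu>: "is_path V E \<mu> p q" "length \<mu> = Suc (hop_dist V E p q)"
    using shortest_path_exists[OF assms(2,7,8)] .
  have "K dvd (path_delay K r \<mu> - (r q - r p))"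
    using path_delay_congruent[of \<mu> K r] \<mu>(1) unfolding is_path_def by simp
  moreover have "\<bar>path_delay K r \<mu>\<bar> \<le> 2 * int \<rho>"
    using path_delay_bounded[OF _ \<open>K > 0\<close> \<mu>(1)] assms(6,9) \<mu>(2)
    unfolding WU0_def by force
  ultimately have "path_delay K r \<mu> =
      (if 0 \<le> (r q - r p) mod K \<and> (r q - r p) mod K \<le> 2 * int \<rho>
       then (r q - r p) mod K else - ((- (r q - r p)) mod K))"
    using small_representative[of K "path_delay K r \<mu>" "r q - r p" "int \<rho>"] assms(4)
    by simp
  then show ?thesis
    using intrinsic_delay_eq_path_delay[OF assms(6) \<mu>(1)] unfolding res_def by simp
qed

end
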